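(* There exist an instance $(C,M)$ of 2-SBCM and a permutation $\pi^0$ of $C$ such that no solution with start permutation $\pi^0$ that has the minimum number of block crossings among all solutions with start permutation $\pi^0$ uses at most one block crossing before the first meeting and at most one block crossing between each pair of consecutive meetings (i.e., every such minimum solution has some $|B_i|\ge 2$).
   Context: A storyline instance is a pair $(C,M)$ where $C=\{1,\dots,k\}$ is a set of characters and $M=[m_1,\dots,m_n]$ is a sequence of meetings with $m_i\subseteq C$; in 2-SBCM every meeting has exactly two characters. A permutation of $C$ lists each character exactly once. For $1\le a\le b<c\le k$, the block crossing $(a,b,c)$ maps $\langle \pi_1,\dots,\pi_k\rangle$ to $\langle \pi_1,\dots,\pi_{a-1},\pi_{b+1},\dots,\pi_c,\pi_a,\dots,\pi_b,\pi_{c+1},\dots,\pi_k\rangle$. A meeting fits (is supported by) a permutation if its characters occupy consecutive positions. A solution is a start permutation $\pi^0$ and sequences $B_1,\dots,B_n$ of block crossings (possibly empty) such that, with $\pi^i$ obtained by applying $B_i$ in order to $\pi^{i-1}$, $\pi^i$ supports $m_i$ for all $i$; its cost is the total number of block crossings. *)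

theory Defs
  imports Main
begin

text \<open>Characters are C = {1..k}. A permutation of C is a list (positions 1..k,
  list index 0..k-1) listing each character exactly once.\<close>

definition is_perm :: "nat \<Rightarrow> nat list \<Rightarrow> bool" where
  "is_perm k p \<longleftrightarrow> distinct p \<and> set p = {1..k}"

definition is_2sbcm :: "nat \<Rightarrow> nat set list \<Rightarrow> bool" where
  "is_2sbcm k M \<longleftrightarrow> (\<forall>m\<in>set M. m \<subseteq> {1..k} \<and> card m = 2)"

type_synonym block_crossing = "nat \<times> nat \<times> nat"

definition valid_bc :: "nat \<Rightarrow> block_crossing \<Rightarrow> bool" where
  "valid_bc k bc = (case bc of (a, b, c) \<Rightarrow> 1 \<le> a \<and> a \<le> b \<and> b < c \<and> c \<le> k)"

text \<open>(a,b,c) maps <p1..pk> to <p1..p(a-1), p(b+1)..pc, pa..pb, p(c+1)..pk> (1-based).\<close>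
definition apply_bc :: "block_crossing \<Rightarrow> nat list \<Rightarrow> nat list" where
  "apply_bc bc p = (case bc of (a, b, c) \<Rightarrow>
     take (a - 1) p @ drop b (take c p) @ drop (a - 1) (take b p) @ drop c p)"

definition apply_bcs :: "block_crossing list \<Rightarrow> nat list \<Rightarrow> nat list" where
  "apply_bcs B p = fold apply_bc B p"

definition supports :: "nat list \<Rightarrow> nat set \<Rightarrow> bool" where
  "supports p m \<longleftrightarrow> (\<exists>i j. i \<le> j \<and> j \<le> length p \<and> set (drop i (take j p)) = m)"

text \<open>pi^i for i = 0..n: pi^i is obtained from pi^(i-1) by applying B_i (Bs ! (i-1)).\<close>
definition perm_after :: "nat list \<Rightarrow> block_crossing list list \<Rightarrow> nat \<Rightarrow> nat list" where
  "perm_after p0 Bs i = fold apply_bcs (take i Bs) p0"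

definition is_solution ::
  "nat \<Rightarrow> nat set list \<Rightarrow> nat list \<Rightarrow> block_crossing list list \<Rightarrow> bool" where
  "is_solution k M p0 Bs \<longleftrightarrow>
     is_perm k p0 \<and> length Bs = length M \<and>
     (\<forall>B\<in>set Bs. \<forall>bc\<in>set B. valid_bc k bc) \<and>
     (\<forall>i < length M. supports (perm_after p0 Bs (Suc i)) (M ! i))"

definition cost :: "block_crossing list list \<Rightarrow> nat" where
  "cost Bs = sum_list (map length Bs)"

end

theory Submission
  imports Defs
begin

text \<open>Take seven characters in the order 1,...,7 and the meetings {1,3}, {3,7}, {4,6}.
  The two block crossings (3,4,7), (1,4,6) before the first meeting produce 7 3 1 2 5 6 4,
  which supports all three meetings, so a minimum solution costs at most two.
  A solution with at most one crossing per gap needs one crossing before {1,3}; an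
  exhaustive check shows that none of the resulting orders has 3 and 7 adjacent, so a second
  crossing is needed before {3,7}, which exhausts the budget, and no single crossing from
  those orders makes both 3,7 and 4,6 adjacent.\<close>

definition adjacent :: "'a list \<Rightarrow> 'a \<Rightarrow> 'a \<Rightarrow> bool" where
  "adjacent xs x y \<longleftrightarrow> (x, y) \<in> set (zip xs (tl xs)) \<or> (y, x) \<in> set (zip xs (tl xs))"

lemma adjacent_Cons_Cons:
  "adjacent (a # b # xs) x y \<longleftrightarrow> (a, b) = (x, y) \<or> (a, b) = (y, x) \<or> adjacent (b # xs) x y"
  by (auto simp: adjacent_def)

lemma adjacent_drop: "adjacent (drop i xs) x y \<Longrightarrow> adjacent xs x y"
  unfolding adjacent_def by (metis drop_Suc drop_zip in_set_dropD tl_drop)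

lemma adjacent_take: "adjacent (take i xs) x y \<Longrightarrow> adjacent xs x y"
  unfolding adjacent_def in_set_zip by (auto simp: nth_tl)

lemma adjacent_if_set_eq_doubleton:
  assumes "set xs = {x, y}" and "x \<noteq> y"
  shows "adjacent xs x y"
  using assms(1)
proof (induction xs)
  case Nil
  then show ?case by simp
next
  case (Cons a r)
  show ?case
  proof (cases r)
    case Nil
    with Cons.prems assms(2) show ?thesis by (metis doubleton_eq_iff insert_absorb2 list.set)
  next
    case (Cons b r')
    show ?thesis
    proof (cases "a = b")
      case True
      with \<open>r = b # r'\<close> have "set (a # r) = set r" by simp
      with Cons.prems have "set r = {x, y}" by simp
      with Cons.IH \<open>r = b # r'\<close> show ?thesis by (simp add: adjacent_Cons_Cons)
    next
      case False
      moreover have "a \<in> {x, y}" "b \<in> {x, y}"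
        using \<open>r = b # r'\<close> by (simp_all flip: Cons.prems)
      ultimately show ?thesis using \<open>r = b # r'\<close> by (auto simp: adjacent_Cons_Cons)
    qed
  qed
qed

lemma supports_doubleton_imp_adjacent:
  "supports p {x, y} \<Longrightarrow> x \<noteq> y \<Longrightarrow> adjacent p x y"
  unfolding supports_def
  by (metis adjacent_if_set_eq_doubleton adjacent_drop adjacent_take)

definition block_crossings :: "nat \<Rightarrow> block_crossing list" where
  "block_crossings k = [(a, b, c). a \<leftarrow> [1..<Suc k], b \<leftarrow> [a..<Suc k], c \<leftarrow> [Suc b..<Suc k]]"

lemma set_block_crossings: "set (block_crossings k) = {bc. valid_bc k bc}"
  by (force simp: block_crossings_def valid_bc_def simp del: upt_Suc)

lemma is_perm_upt: "is_perm k [1..<Suc k]"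
  by (simp add: is_perm_def atLeastLessThanSuc_atLeastAtMost del: upt_Suc)

lemma supports_consecutive: "Suc i < length p \<Longrightarrow> supports p {p ! i, p ! Suc i}"
  unfolding supports_def
  by (rule exI[of _ i], rule exI[of _ "Suc (Suc i)"]) (simp add: Cons_nth_drop_Suc take_Suc_conv_app_nth)

definition meetings :: "nat set list" where
  "meetings = [{1, 3}, {3, 7}, {4, 6}]"

lemma is_2sbcm_meetings: "is_2sbcm 7 meetings"
  by (simp add: is_2sbcm_def meetings_def)

lemma two_crossing_solution: "is_solution 7 meetings [1..<8] [[(3, 4, 7), (1, 4, 6)], [], []]"
proof -
  let ?Bs = "[[(3, 4, 7), (1, 4, 6)], [], []]" and ?p = "[7, 3, 1, 2, 5, 6, 4]"
  have "perm_after [1..<8] ?Bs (Suc i) = ?p" if "i < 3" for i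
    using that by (auto simp: less_Suc_eq numeral_3_eq_3 perm_after_def apply_bcs_def apply_bc_def upt_rec)
  moreover have "supports ?p m" if "m \<in> set meetings" for m
  proof -
    have "supports ?p {?p ! 1, ?p ! 2}" "supports ?p {?p ! 0, ?p ! 1}" "supports ?p {?p ! 5, ?p ! 6}"
      using supports_consecutive[of 1 ?p] supports_consecutive[of 0 ?p]
        supports_consecutive[of 5 ?p] by simp_all
    with that show ?thesis by (auto simp: meetings_def insert_commute)
  qed
  moreover have "length meetings = 3"
    by (simp add: meetings_def)
  ultimately show ?thesis
    using is_perm_upt[of 7] by (auto simp: is_solution_def valid_bc_def)
qed

definition orders_joining_1_3 :: "nat list list" where
  "orders_joining_1_3 = [[1, 3, 2, 4, 5, 6, 7], [1, 3, 4, 2, 5, 6, 7], [1, 3, 4, 5, 2, 6, 7],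
     [1, 3, 4, 5, 6, 2, 7], [1, 3, 4, 5, 6, 7, 2], [2, 1, 3, 4, 5, 6, 7], [2, 3, 1, 4, 5, 6, 7],
     [3, 1, 2, 4, 5, 6, 7]]"

lemma one_crossing_joining_1_3:
  "bc \<in> set (block_crossings 7) \<Longrightarrow> adjacent (apply_bc bc [1..<8]) 1 3 \<Longrightarrow>
    apply_bc bc [1..<8] \<in> set orders_joining_1_3"
  by (auto simp: block_crossings_def orders_joining_1_3_def upt_rec apply_bc_def adjacent_def)

lemma orders_joining_1_3_miss_3_7_and_4_6:
  "\<forall>q\<in>set orders_joining_1_3. \<not> adjacent q 3 7 \<and>
    (\<forall>bc\<in>set (block_crossings 7). \<not> (adjacent (apply_bc bc q) 3 7 \<and> adjacent (apply_bc bc q) 4 6))"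
  by code_simp

lemma no_solution_with_one_crossing_per_gap:
  assumes sol: "is_solution 7 meetings [1..<8] Bs"
    and cost: "cost Bs \<le> 2"
    and short: "\<forall>i < length Bs. length (Bs ! i) \<le> 1"
  shows False
proof -
  have "length Bs = 3"
    using sol by (simp add: is_solution_def meetings_def)
  then obtain B1 B2 B3 where Bs: "Bs = [B1, B2, B3]"
    by (auto simp: numeral_3_eq_3 length_Suc_conv)
  define q where "q = apply_bcs B1 [1..<8]"
  define r where "r = apply_bcs B2 q"
  have "supports (perm_after [1..<8] Bs (Suc i)) (meetings ! i)" if "i < 3" for i
    using sol that by (simp add: is_solution_def meetings_def)
  from this[of 0] this[of 1] this[of 2]
  have "supports q {1, 3}" "supports r {3, 7}" "supports (apply_bcs B3 r) {4, 6}"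
    by (simp_all add: Bs q_def r_def meetings_def perm_after_def)
  then have q13: "adjacent q 1 3" and r37: "adjacent r 3 7"
    and r46: "adjacent (apply_bcs B3 r) 4 6"
    by (simp_all add: supports_doubleton_imp_adjacent)
  have valid: "bc \<in> set (block_crossings 7)" if "B \<in> set Bs" "bc \<in> set B" for B bc
    using sol that by (simp add: is_solution_def set_block_crossings)
  have "B1 \<noteq> []"
    using q13 by (auto simp: q_def apply_bcs_def adjacent_def upt_rec)
  then obtain bc1 where B1: "B1 = [bc1]"
    using short by (cases B1) (auto simp: Bs)
  then have "q \<in> set orders_joining_1_3"
    using one_crossing_joining_1_3 valid[of B1 bc1] q13 by (simp add: Bs q_def apply_bcs_def)
  then have "\<not> adjacent q 3 7" and no_second:
    "\<forall>bc\<in>set (block_crossings 7). \<not> (adjacent (apply_bc bc q) 3 7 \<and> adjacent (apply_bc bc q) 4 6)"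
    using orders_joining_1_3_miss_3_7_and_4_6 by auto
  then have "B2 \<noteq> []"
    using r37 by (auto simp: r_def apply_bcs_def)
  then obtain bc2 where B2: "B2 = [bc2]"
    using short by (cases B2) (auto simp: Bs)
  then have "B3 = []"
    using cost by (simp add: cost_def Bs B1)
  then show False
    using no_second valid[of B2 bc2] r37 r46 by (auto simp: Bs B2 r_def apply_bcs_def)
qed

theorem proposition1:
  shows "\<exists>k M p0. is_2sbcm k M \<and> is_perm k p0 \<and>
     (\<forall>Bs. is_solution k M p0 Bs \<and>
           (\<forall>Bs'. is_solution k M p0 Bs' \<longrightarrow> cost Bs \<le> cost Bs') \<longrightarrow>
           (\<exists>i < length Bs. 2 \<le> length (Bs ! i)))"
proof -
  have "\<exists>i < length Bs. 2 \<le> length (Bs ! i)"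
    if "is_solution 7 meetings [1..<8] Bs"
      and "\<forall>Bs'. is_solution 7 meetings [1..<8] Bs' \<longrightarrow> cost Bs \<le> cost Bs'" for Bs
  proof -
    have "cost Bs \<le> 2"
      using that(2) two_crossing_solution by (force simp: cost_def)
    with that(1) show ?thesis
      using no_solution_with_one_crossing_per_gap by (metis not_less_eq_eq Suc_1)
  qed
  moreover have "is_perm 7 [1..<8]"
    using is_perm_upt[of 7] by simp
  ultimately show ?thesis
    using is_2sbcm_meetings by blast
qed

end
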